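(* Let $G$ be an edge-magic $(p,q)$-graph and $n\ge 1$. Let $\alpha$ and $\beta$ be the smallest and the largest valences of edge-magic labelings of $G$, respectively, and suppose $\beta-\alpha<(\alpha-(p+q+2))\,n$. Then for any orientations $\overrightarrow{G}$ of $G$ and $\overrightarrow{K}_{1,n}^l$ of $K_{1,n}^l$, $$|\tau_{\overrightarrow{G}\otimes\overrightarrow{K}_{1,n}^l}|\ \ge\ (n+3)\,|\tau_{G}|.$$
   Context: Graphs may have loops and multiple edges. A $(p,q)$-graph has $p$ vertices and $q$ edges. An edge-magic labeling of a $(p,q)$-graph $G$ is a bijection $f:V(G)\cup E(G)\to[1,p+q]$ such that $f(x)+f(xy)+f(y)$ equals a constant $\mathrm{val}(f)$ (the valence) for every edge $xy$; $G$ is edge-magic if it has one. For a graph $H$, the magic set $\tau_H$ is the set of integers that are valences of edge-magic labelings of $H$; for a digraph, $\tau$ refers to its underlying graph. $K_{1,n}^l$ is the star $K_{1,n}$ with a loop attached at its central vertex. For digraphs $D$ and $F$, $D\otimes F$ is the digraph with vertex set $V(D)\times V(F)$ and arcs $((a,i),(b,j))$ for every arc $(a,b)$ of $D$ and arc $(i,j)$ of $F$ (loops allowed). *)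

theory Defs
  imports Main "Graph_Theory.Digraph"
begin

text \<open>Finite undirected graphs, loops and multiple edges allowed.  Each edge e has
  an (unordered) pair of end vertices, stored as a pair uends G e; a loop has equal ends.\<close>
record ('v,'e) ugraph =
  uverts :: "'v set"
  uedges :: "'e set"
  uends  :: "'e \<Rightarrow> 'v \<times> 'v"

definition wf_ugraph :: "('v,'e) ugraph \<Rightarrow> bool" where
  "wf_ugraph G \<longleftrightarrow> finite (uverts G) \<and> finite (uedges G) \<and>
     (\<forall>e\<in>uedges G. fst (uends G e) \<in> uverts G \<and> snd (uends G e) \<in> uverts G)"

definition edge_magic_labeling :: "('v,'e) ugraph \<Rightarrow> ('v + 'e \<Rightarrow> nat) \<Rightarrow> nat \<Rightarrow> bool" where
  "edge_magic_labeling G f k \<longleftrightarrow>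
     bij_betw f (Inl ` uverts G \<union> Inr ` uedges G) {1 .. card (uverts G) + card (uedges G)} \<and>
     (\<forall>e\<in>uedges G. f (Inl (fst (uends G e))) + f (Inr e) + f (Inl (snd (uends G e))) = k)"

definition edge_magic :: "('v,'e) ugraph \<Rightarrow> bool" where
  "edge_magic G \<longleftrightarrow> (\<exists>f k. edge_magic_labeling G f k)"

definition magic_set :: "('v,'e) ugraph \<Rightarrow> nat set" where
  "magic_set G = {k. \<exists>f. edge_magic_labeling G f k}"

definition underlying :: "('v,'e) pre_digraph \<Rightarrow> ('v,'e) ugraph" where
  "underlying D = \<lparr>uverts = verts D, uedges = arcs D, uends = (\<lambda>a. (tail D a, head D a))\<rparr>"

definition is_orientation :: "('v,'e) ugraph \<Rightarrow> ('v,'e) pre_digraph \<Rightarrow> bool" where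
  "is_orientation G D \<longleftrightarrow> verts D = uverts G \<and> arcs D = uedges G \<and>
     (\<forall>e\<in>uedges G. (tail D e, head D e) = uends G e \<or> (head D e, tail D e) = uends G e)"

definition otimes :: "('a,'b) pre_digraph \<Rightarrow> ('c,'d) pre_digraph \<Rightarrow> ('a \<times> 'c, 'b \<times> 'd) pre_digraph" where
  "otimes D F = \<lparr>verts = verts D \<times> verts F, arcs = arcs D \<times> arcs F,
     tail = (\<lambda>(a,i). (tail D a, tail F i)), head = (\<lambda>(a,i). (head D a, head F i))\<rparr>"

text \<open>K_{1,n}^l: centre 0, leaves 1..n; edge 0 is the loop at 0, edge i joins 0 and i.\<close>
definition star_loop :: "nat \<Rightarrow> (nat, nat) ugraph" where
  "star_loop n = \<lparr>uverts = {0..n}, uedges = {0..n}, uends = (\<lambda>i. (0, i))\<rparr>"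

end

(*
  Write N = p + q and let f be an edge-magic labeling of G with valence k.  Give the vertex i of
  the looped star the label (c + i) mod (n + 1) and its edge j the label n minus the label of the
  leaf j, so that every edge of the star has label sum c + n.  Any bijection
  psi : [1, N] x [0, n] -> [1, N (n + 1)] whose sums over triples depend only on the sums of the
  coordinates then pairs f with this star labeling into an edge-magic labeling of the product.
  The pairing psi (m, s) = (n + 1) (m - 1) + s + 1 yields the n + 1 valences (n + 1) k + c - 2 n,
  and psi (m, s) = m + N s yields k + N n and k + 2 N n.  Since alpha + beta <= 3 (N + 1) (by the
  complementary labeling x |-> N + 1 - f x), the hypothesis on alpha and beta puts these three
  families into disjoint ranges, which gives (n + 3) |tau_G| distinct valences of the product.
*)

theory Submission
  imports Defs
begin

lemma bij_betw_of_inj_on_card: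
  assumes "inj_on h A" "h ` A \<subseteq> B" "finite B" "card A = card B"
  shows "bij_betw h A B"
  using assms card_subset_eq[OF assms(3,2)] by (simp add: bij_betw_def card_image)

lemma card_Un_of_less:
  fixes A B :: "'a::linorder set"
  assumes "finite A" "finite B" "\<And>a b. a \<in> A \<Longrightarrow> b \<in> B \<Longrightarrow> a < b"
  shows "card (A \<union> B) = card A + card B"
proof -
  have "A \<inter> B = {}" using assms(3) less_irrefl by blast
  then show ?thesis using assms(1,2) by (rule card_Un_disjoint[rotated 2])
qed

lemma bij_betw_shift_mod: "bij_betw (\<lambda>i. ((c::nat) + i) mod Suc n) {0..n} {0..n}"
proof -
  have "inj_on (\<lambda>i. (c + i) mod Suc n) {0..n}"
  proof (rule inj_onI)
    fix i j assume "i \<in> {0..n}" "j \<in> {0..n}" "(c + i) mod Suc n = (c + j) mod Suc n"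
    moreover have "((c + i) mod Suc n = (c + j) mod Suc n) = (i mod Suc n = j mod Suc n)"
      by (simp add: nat_mod_eq_iff)
    ultimately have "i mod Suc n = j mod Suc n" by blast
    with \<open>i \<in> {0..n}\<close> \<open>j \<in> {0..n}\<close> show "i = j" by simp
  qed
  moreover have "(\<lambda>i. (c + i) mod Suc n) ` {0..n} \<subseteq> {0..n}"
    by (auto simp: less_Suc_eq_le)
  ultimately show ?thesis by (simp add: bij_betw_def endo_inj_surj)
qed

lemma bij_betw_reflect: "bij_betw (\<lambda>m. a - m) {b..a - b} {b..a - (b::nat)}"
  by (rule bij_betw_byWitness[where f' = "\<lambda>m. a - m"]) auto

lemma edge_magic_labeling_vertex_range:
  assumes "wf_ugraph G" "edge_magic_labeling G f k" "v \<in> uverts G"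
  shows "f (Inl v) \<in> {1..card (uverts G) + card (uedges G)}"
  using assms by (auto simp: edge_magic_labeling_def bij_betw_def)

lemma edge_magic_labeling_edge_range:
  assumes "edge_magic_labeling G f k" "e \<in> uedges G"
  shows "f (Inr e) \<in> {1..card (uverts G) + card (uedges G)}"
  using assms by (auto simp: edge_magic_labeling_def bij_betw_def)

lemma edge_magic_labeling_edge_sum:
  assumes "wf_ugraph G" "edge_magic_labeling G f k" "e \<in> uedges G"
  defines "N \<equiv> card (uverts G) + card (uedges G)"
  obtains x y z where "x \<in> {1..N}" "y \<in> {1..N}" "z \<in> {1..N}"
    "f (Inl (fst (uends G e))) = x" "f (Inr e) = y" "f (Inl (snd (uends G e))) = z" "x + y + z = k"
proof -
  have a: "fst (uends G e) \<in> uverts G" and b: "snd (uends G e) \<in> uverts G"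
    using assms(1,3) by (auto simp: wf_ugraph_def)
  show ?thesis
    using that[unfolded N_def, OF edge_magic_labeling_vertex_range[OF assms(1,2) a]
        edge_magic_labeling_edge_range[OF assms(2,3)] edge_magic_labeling_vertex_range[OF assms(1,2) b]]
      assms(2,3)
    by (simp add: edge_magic_labeling_def)
qed

lemma magic_set_subset_atLeastAtMost:
  assumes "wf_ugraph G" "uedges G \<noteq> {}"
  shows "magic_set G \<subseteq> {3..3 * (card (uverts G) + card (uedges G))}"
proof
  fix k assume "k \<in> magic_set G"
  then obtain f where f: "edge_magic_labeling G f k" by (auto simp: magic_set_def)
  obtain e where "e \<in> uedges G" using assms(2) by auto
  from edge_magic_labeling_edge_sum[OF assms(1) f this]
  show "k \<in> {3..3 * (card (uverts G) + card (uedges G))}" by fastforce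
qed

lemma edge_magic_labeling_complement:
  assumes "wf_ugraph G" "edge_magic_labeling G f k"
  defines "N \<equiv> card (uverts G) + card (uedges G)"
  shows "edge_magic_labeling G (\<lambda>x. N + 1 - f x) (3 * (N + 1) - k)"
proof -
  have "bij_betw ((\<lambda>m. N + 1 - m) \<circ> f) (Inl ` uverts G \<union> Inr ` uedges G) {1..N}"
    using assms(2) bij_betw_reflect[of "N + 1" 1]
    by (intro bij_betw_trans) (simp_all add: edge_magic_labeling_def N_def)
  moreover have "N + 1 - f (Inl (fst (uends G e))) + (N + 1 - f (Inr e))
      + (N + 1 - f (Inl (snd (uends G e)))) = 3 * (N + 1) - k" if "e \<in> uedges G" for e
    using edge_magic_labeling_edge_sum[OF assms(1,2) that] unfolding N_def by fastforce
  ultimately show ?thesis by (simp add: edge_magic_labeling_def comp_def N_def)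
qed

lemma magic_set_complement:
  assumes "wf_ugraph G" "k \<in> magic_set G"
  shows "3 * (card (uverts G) + card (uedges G) + 1) - k \<in> magic_set G"
  using assms edge_magic_labeling_complement by (fastforce simp: magic_set_def)

lemma finite_magic_set:
  assumes "wf_ugraph G" "uedges G \<noteq> {}"
  shows "finite (magic_set G)"
  using magic_set_subset_atLeastAtMost[OF assms] by (rule finite_subset) simp

lemma Min_add_Max_magic_set_le:
  assumes "wf_ugraph G" "uedges G \<noteq> {}" "edge_magic G"
  shows "Min (magic_set G) + Max (magic_set G) \<le> 3 * (card (uverts G) + card (uedges G) + 1)"
proof -
  have "magic_set G \<noteq> {}" using assms(3) by (auto simp: edge_magic_def magic_set_def)
  then have "Max (magic_set G) \<in> magic_set G" using finite_magic_set[OF assms(1,2)] by simp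
  then have "Min (magic_set G) \<le> 3 * (card (uverts G) + card (uedges G) + 1) - Max (magic_set G)"
    and "Max (magic_set G) \<le> 3 * (card (uverts G) + card (uedges G))"
    using magic_set_complement[OF assms(1)] finite_magic_set[OF assms(1,2)]
      magic_set_subset_atLeastAtMost[OF assms(1,2)] by auto
  then show ?thesis by arith
qed

lemma orientation_ends:
  assumes "is_orientation G D" "e \<in> uedges G"
  shows "(tail D e, head D e) = uends G e \<or> (head D e, tail D e) = uends G e"
  using assms by (simp add: is_orientation_def)

lemma orientation_tail_head_in_verts:
  assumes "wf_ugraph G" "is_orientation G D" "e \<in> uedges G"
  shows "tail D e \<in> uverts G" "head D e \<in> uverts G"
proof -
  obtain a b where ab: "uends G e = (a, b)" by fastforce
  then have "a \<in> uverts G" "b \<in> uverts G" using assms(1,3) by (force simp: wf_ugraph_def)+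
  then show "tail D e \<in> uverts G" "head D e \<in> uverts G"
    using orientation_ends[OF assms(2,3)] ab by auto
qed

lemma orientation_ends_sum:
  fixes x :: "'v \<Rightarrow> nat"
  assumes "is_orientation G D" "e \<in> uedges G"
  shows "x (tail D e) + y + x (head D e) = x (fst (uends G e)) + y + x (snd (uends G e))"
  using orientation_ends[OF assms] by (cases "uends G e") (auto simp: add_ac)

lemma underlying_otimes_orientation:
  assumes "is_orientation G D" "is_orientation H F"
  shows "uverts (underlying (otimes D F)) = uverts G \<times> uverts H"
    and "uedges (underlying (otimes D F)) = uedges G \<times> uedges H"
    and "uends (underlying (otimes D F)) (e, j) = ((tail D e, tail F j), (head D e, head F j))"
  using assms by (simp_all add: underlying_def otimes_def is_orientation_def)

lemma wf_ugraph_underlying_otimes: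
  assumes "wf_ugraph G" "wf_ugraph H" "is_orientation G D" "is_orientation H F"
  shows "wf_ugraph (underlying (otimes D F))"
  unfolding wf_ugraph_def underlying_otimes_orientation[OF assms(3,4)]
  using assms(1,2) orientation_tail_head_in_verts[OF assms(1,3)] orientation_tail_head_in_verts[OF assms(2,4)]
  by (auto simp: wf_ugraph_def underlying_otimes_orientation[OF assms(3,4)])

lemma bij_betw_case_sum_pairs:
  assumes f: "bij_betw f (Inl ` V \<union> Inr ` E) B" and \<phi>: "bij_betw \<phi> V' C" and \<chi>: "bij_betw \<chi> E' C"
    and fin: "finite V" "finite E" "finite C"
  shows "bij_betw (case_sum (\<lambda>(v, i). (f (Inl v), \<phi> i)) (\<lambda>(e, j). (f (Inr e), \<chi> j)))
           (Inl ` (V \<times> V') \<union> Inr ` (E \<times> E')) (B \<times> C)"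
proof (rule bij_betw_of_inj_on_card)
  show "inj_on (case_sum (\<lambda>(v, i). (f (Inl v), \<phi> i)) (\<lambda>(e, j). (f (Inr e), \<chi> j)))
      (Inl ` (V \<times> V') \<union> Inr ` (E \<times> E'))"
    unfolding inj_on_def
    by (auto simp: inj_on_eq_iff[OF bij_betw_imp_inj_on[OF f]]
        inj_on_eq_iff[OF bij_betw_imp_inj_on[OF \<phi>]] inj_on_eq_iff[OF bij_betw_imp_inj_on[OF \<chi>]])
  show "case_sum (\<lambda>(v, i). (f (Inl v), \<phi> i)) (\<lambda>(e, j). (f (Inr e), \<chi> j))
      ` (Inl ` (V \<times> V') \<union> Inr ` (E \<times> E')) \<subseteq> B \<times> C"
    using bij_betwE[OF f] bij_betwE[OF \<phi>] bij_betwE[OF \<chi>] by auto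
  have "card V' = card C" "card E' = card C" "card B = card V + card E"
    using bij_betw_same_card[OF \<phi>] bij_betw_same_card[OF \<chi>] bij_betw_same_card[OF f] fin
    by (simp_all add: card_Plus flip: Plus_def)
  moreover have "finite V'" "finite E'" using \<phi> \<chi> fin(3) by (simp_all add: bij_betw_finite)
  ultimately show "card (Inl ` (V \<times> V') \<union> Inr ` (E \<times> E')) = card (B \<times> C)"
    using fin by (simp add: card_Plus card_cartesian_product algebra_simps flip: Plus_def)
  show "finite (B \<times> C)" using bij_betw_finite[OF f] fin by (simp flip: Plus_def)
qed

lemma edge_magic_labeling_otimes:
  fixes G :: "('v,'e) ugraph" and H :: "('w,'d) ugraph" and \<psi> W :: "nat \<Rightarrow> nat \<Rightarrow> nat"
  defines "N \<equiv> card (uverts G) + card (uedges G)"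
  assumes G: "wf_ugraph G" "is_orientation G D" and H: "wf_ugraph H" "is_orientation H F"
    and f: "edge_magic_labeling G f k"
    and \<phi>: "bij_betw \<phi> (uverts H) {0..r}" and \<chi>: "bij_betw \<chi> (uedges H) {0..r}"
    and \<kappa>: "\<forall>j\<in>uedges H. \<phi> (fst (uends H j)) + \<chi> j + \<phi> (snd (uends H j)) = \<kappa>"
    and \<psi>: "bij_betw (\<lambda>(m, s). \<psi> m s) ({1..N} \<times> {0..r}) {1..N * (r + 1)}"
    and W: "\<And>m1 m2 m3 s1 s2 s3. m1 \<in> {1..N} \<Longrightarrow> m2 \<in> {1..N} \<Longrightarrow> m3 \<in> {1..N} \<Longrightarrow>
              s1 \<le> r \<Longrightarrow> s2 \<le> r \<Longrightarrow> s3 \<le> r \<Longrightarrow>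
              \<psi> m1 s1 + \<psi> m2 s2 + \<psi> m3 s3 = W (m1 + m2 + m3) (s1 + s2 + s3)"
  shows "edge_magic_labeling (underlying (otimes D F))
           (case_sum (\<lambda>(v, i). \<psi> (f (Inl v)) (\<phi> i)) (\<lambda>(e, j). \<psi> (f (Inr e)) (\<chi> j))) (W k \<kappa>)"
proof -
  define P where "P = underlying (otimes D F)"
  define dom where "dom = Inl ` (uverts G \<times> uverts H) \<union> Inr ` (uedges G \<times> uedges H)"
  define h where "h = case_sum (\<lambda>(v, i). (f (Inl v), \<phi> i)) (\<lambda>(e, j). (f (Inr e), \<chi> j))"
  have f_bij: "bij_betw f (Inl ` uverts G \<union> Inr ` uedges G) {1..N}"
    using f by (simp add: edge_magic_labeling_def N_def)
  have card_P: "card (uverts P) + card (uedges P) = N * (r + 1)"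
    using G H bij_betw_same_card[OF \<phi>] bij_betw_same_card[OF \<chi>]
    by (simp add: P_def underlying_otimes_orientation[OF G(2) H(2)] card_cartesian_product
        wf_ugraph_def N_def algebra_simps)
  have "bij_betw h dom ({1..N} \<times> {0..r})"
    unfolding h_def dom_def
    using G by (intro bij_betw_case_sum_pairs[OF f_bij \<phi> \<chi>]) (simp_all add: wf_ugraph_def)
  then have g_bij: "bij_betw ((\<lambda>(m, s). \<psi> m s) \<circ> h) dom {1..N * (r + 1)}"
    using \<psi> by (rule bij_betw_trans)
  have "(\<lambda>(m, s). \<psi> m s) \<circ> h
      = case_sum (\<lambda>(v, i). \<psi> (f (Inl v)) (\<phi> i)) (\<lambda>(e, j). \<psi> (f (Inr e)) (\<chi> j))"
    by (auto simp: fun_eq_iff h_def split: sum.split)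
  moreover have "\<psi> (f (Inl (tail D e))) (\<phi> (tail F j)) + \<psi> (f (Inr e)) (\<chi> j)
      + \<psi> (f (Inl (head D e))) (\<phi> (head F j)) = W k \<kappa>"
    if "e \<in> uedges G" "j \<in> uedges H" for e j
  proof -
    have "\<psi> (f (Inl (tail D e))) (\<phi> (tail F j)) + \<psi> (f (Inr e)) (\<chi> j)
        + \<psi> (f (Inl (head D e))) (\<phi> (head F j))
        = W (f (Inl (tail D e)) + f (Inr e) + f (Inl (head D e))) (\<phi> (tail F j) + \<chi> j + \<phi> (head F j))"
      using that orientation_tail_head_in_verts[OF G] orientation_tail_head_in_verts[OF H]
        bij_betwE[OF f_bij] bij_betwE[OF \<phi>] bij_betwE[OF \<chi>]
      by (intro W) auto
    also have "\<dots> = W k \<kappa>"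
    proof -
      have "f (Inl (tail D e)) + f (Inr e) + f (Inl (head D e)) = k"
        using f that(1) orientation_ends_sum[OF G(2) that(1), of "\<lambda>v. f (Inl v)" "f (Inr e)"]
        by (simp add: edge_magic_labeling_def)
      moreover have "\<phi> (tail F j) + \<chi> j + \<phi> (head F j) = \<kappa>"
        using \<kappa> that(2) orientation_ends_sum[OF H(2) that(2), of \<phi> "\<chi> j"] by simp
      ultimately show ?thesis by simp
    qed
    finally show ?thesis .
  qed
  ultimately show ?thesis
    using g_bij card_P unfolding edge_magic_labeling_def P_def
    by (auto simp: underlying_otimes_orientation[OF G(2) H(2)] dom_def)
qed

lemma wf_ugraph_star_loop: "wf_ugraph (star_loop n)"
  by (simp add: wf_ugraph_def star_loop_def)

lemma star_loop_shifted_labeling: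
  assumes "c \<le> n"
  shows "bij_betw (\<lambda>i. (c + i) mod Suc n) (uverts (star_loop n)) {0..n}"
    and "bij_betw (\<lambda>j. n - (c + j) mod Suc n) (uedges (star_loop n)) {0..n}"
    and "\<forall>j\<in>uedges (star_loop n). (c + fst (uends (star_loop n) j)) mod Suc n
           + (n - (c + j) mod Suc n) + (c + snd (uends (star_loop n) j)) mod Suc n = c + n"
proof -
  show "bij_betw (\<lambda>i. (c + i) mod Suc n) (uverts (star_loop n)) {0..n}"
    by (simp add: star_loop_def bij_betw_shift_mod)
  show "bij_betw (\<lambda>j. n - (c + j) mod Suc n) (uedges (star_loop n)) {0..n}"
    using bij_betw_trans[OF bij_betw_shift_mod bij_betw_reflect[of n 0]]
    by (simp add: star_loop_def comp_def)
  show "\<forall>j\<in>uedges (star_loop n). (c + fst (uends (star_loop n) j)) mod Suc n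
      + (n - (c + j) mod Suc n) + (c + snd (uends (star_loop n) j)) mod Suc n = c + n"
  proof
    fix j
    have "(c + j) mod Suc n \<le> c + n" using mod_less_divisor[of "Suc n" "c + j"] by linarith
    then show "(c + fst (uends (star_loop n) j)) mod Suc n
        + (n - (c + j) mod Suc n) + (c + snd (uends (star_loop n) j)) mod Suc n = c + n"
      using assms by (simp add: star_loop_def)
  qed
qed

lemma mult_add_eq_mult_add_cancel:
  fixes b x y s t :: nat
  assumes "s < b" "t < b" "b * x + s = b * y + t"
  shows "x = y" "s = t"
proof -
  have "(b * x + s) div b = x" "(b * x + s) mod b = s" using assms(1) by auto
  moreover have "(b * y + t) div b = y" "(b * y + t) mod b = t" using assms(2) by auto
  ultimately show "x = y" "s = t" using assms(3) by metis+
qed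

lemma bij_betw_pair_encode_fst_major:
  fixes r N :: nat
  shows "bij_betw (\<lambda>(m, s). (r + 1) * (m - 1) + s + 1) ({1..N} \<times> {0..r}) {1..N * (r + 1)}"
proof (rule bij_betw_of_inj_on_card)
  show "inj_on (\<lambda>(m, s). (r + 1) * (m - 1) + s + 1) ({1..N} \<times> {0..r})"
  proof (rule inj_onI, clarify)
    fix m s m' s' assume "m \<in> {1..N}" "m' \<in> {1..N}" "s \<in> {0..r}" "s' \<in> {0..r}"
      "(r + 1) * (m - 1) + s + 1 = (r + 1) * (m' - 1) + s' + 1"
    then have "m - 1 = m' - 1" "s = s'"
      using mult_add_eq_mult_add_cancel[of s "r + 1" s' "m - 1" "m' - 1"] by auto
    with \<open>m \<in> {1..N}\<close> \<open>m' \<in> {1..N}\<close> show "m = m' \<and> s = s'" by auto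
  qed
  have "(r + 1) * (m - 1) + s + 1 \<le> N * (r + 1)" if "m \<in> {1..N}" "s \<le> r" for m s
  proof -
    have "(r + 1) * (m - 1) + s + 1 \<le> (r + 1) * (m - 1) + (r + 1)" using that by simp
    also have "\<dots> = (r + 1) * m" using that by (cases m) (auto simp: algebra_simps)
    also have "\<dots> \<le> (r + 1) * N" using that by (intro mult_le_mono2) simp
    finally show ?thesis by (simp add: mult.commute)
  qed
  then show "(\<lambda>(m, s). (r + 1) * (m - 1) + s + 1) ` ({1..N} \<times> {0..r}) \<subseteq> {1..N * (r + 1)}"
    by auto
qed (simp_all add: card_cartesian_product)

lemma bij_betw_pair_encode_snd_major:
  fixes r N :: nat
  shows "bij_betw (\<lambda>(m, s). m + N * s) ({1..N} \<times> {0..r}) {1..N * (r + 1)}"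
proof (rule bij_betw_of_inj_on_card)
  show "inj_on (\<lambda>(m, s). m + N * s) ({1..N} \<times> {0..r})"
  proof (rule inj_onI, clarify)
    fix m s m' s' assume "m \<in> {1..N}" "m' \<in> {1..N}" "m + N * s = m' + N * s'"
    then have "N * s + (m - 1) = N * s' + (m' - 1)" "m - 1 < N" "m' - 1 < N" by auto
    with \<open>m \<in> {1..N}\<close> \<open>m' \<in> {1..N}\<close> show "m = m' \<and> s = s'"
      using mult_add_eq_mult_add_cancel[of "m - 1" N "m' - 1" s s'] by auto
  qed
  have "m + N * s \<le> N * (r + 1)" if "m \<le> N" "s \<le> r" for m s
    using that add_le_mono[OF that(1) mult_le_mono2[OF that(2)]] by (simp add: algebra_simps)
  then show "(\<lambda>(m, s). m + N * s) ` ({1..N} \<times> {0..r}) \<subseteq> {1..N * (r + 1)}"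
    by auto
qed (simp_all add: card_cartesian_product)

lemma pair_encode_fst_major_add:
  fixes r :: nat
  assumes "1 \<le> m1" "1 \<le> m2" "1 \<le> m3"
  shows "(r + 1) * (m1 - 1) + s1 + 1 + ((r + 1) * (m2 - 1) + s2 + 1) + ((r + 1) * (m3 - 1) + s3 + 1)
    = (r + 1) * (m1 + m2 + m3 - 3) + (s1 + s2 + s3) + 3"
  using assms by (cases m1; cases m2; cases m3) (auto simp: algebra_simps)

lemma magic_set_otimes_star_loop:
  fixes G :: "('v,'e) ugraph"
  defines "N \<equiv> card (uverts G) + card (uedges G)"
  assumes G: "wf_ugraph G" "is_orientation G D" and F: "is_orientation (star_loop n) F"
    and k: "k \<in> magic_set G" and c: "c \<le> n"
  shows "(n + 1) * (k - 3) + (c + n) + 3 \<in> magic_set (underlying (otimes D F))"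
    and "k + N * (c + n) \<in> magic_set (underlying (otimes D F))"
proof -
  obtain f where f: "edge_magic_labeling G f k" using k by (auto simp: magic_set_def)
  note product = edge_magic_labeling_otimes[OF G wf_ugraph_star_loop F f star_loop_shifted_labeling[OF c]]
  show "(n + 1) * (k - 3) + (c + n) + 3 \<in> magic_set (underlying (otimes D F))"
    unfolding magic_set_def mem_Collect_eq
    by (rule exI, rule product[where \<psi> = "\<lambda>m s. (n + 1) * (m - 1) + s + 1"
          and W = "\<lambda>t u. (n + 1) * (t - 3) + u + 3", OF bij_betw_pair_encode_fst_major])
      (rule pair_encode_fst_major_add; simp)
  show "k + N * (c + n) \<in> magic_set (underlying (otimes D F))"
    unfolding magic_set_def mem_Collect_eq
    by (rule exI, rule product[where \<psi> = "\<lambda>m s. m + N * s" and W = "\<lambda>t u. t + N * u",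
          folded N_def, OF bij_betw_pair_encode_snd_major])
      (simp add: algebra_simps)
qed

lemma valence_separation:
  fixes \<alpha> \<beta> N n :: nat
  assumes sum: "\<alpha> + \<beta> \<le> 3 * (N + 1)"
    and spread: "int \<beta> - int \<alpha> < (int \<alpha> - int (N + 2)) * int n"
  shows "\<beta> + N * n + 2 * n < (n + 1) * \<alpha>"
    and "(n + 1) * \<beta> < \<alpha> + 2 * N * n + n"
proof -
  have "int (\<beta> + N * n + 2 * n) < int ((n + 1) * \<alpha>)"
    using spread by (simp add: algebra_simps)
  then show "\<beta> + N * n + 2 * n < (n + 1) * \<alpha>" by linarith
  have "int \<alpha> - int (N + 2) \<le> int (2 * N + 1) - int \<beta>" using sum by simp
  then have "(int \<alpha> - int (N + 2)) * int n \<le> (int (2 * N + 1) - int \<beta>) * int n"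
    by (rule mult_right_mono) simp
  then have "int ((n + 1) * \<beta>) < int (\<alpha> + 2 * N * n + n)"
    using spread by (simp add: algebra_simps)
  then show "(n + 1) * \<beta> < \<alpha> + 2 * N * n + n" by linarith
qed

lemma card_valence_families:
  fixes T X :: "nat set"
  assumes "finite X" "finite T" "T \<subseteq> {\<alpha>..\<beta>}" "3 \<le> \<alpha>"
    and low: "\<beta> + N * n + 2 * n < (n + 1) * \<alpha>" and high: "(n + 1) * \<beta> < \<alpha> + 2 * N * n + n"
    and mid_in: "\<And>k c. k \<in> T \<Longrightarrow> c \<le> n \<Longrightarrow> (n + 1) * (k - 3) + (c + n) + 3 \<in> X"
    and low_in: "\<And>k. k \<in> T \<Longrightarrow> k + N * n \<in> X"
    and high_in: "\<And>k. k \<in> T \<Longrightarrow> k + N * (n + n) \<in> X"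
  shows "(n + 3) * card T \<le> card X"
proof -
  define mid where "mid = (\<lambda>(k, c). (n + 1) * (k - 3) + (c + n) + 3)"
  define L where "L = (\<lambda>k. k + N * n) ` T"
  define M where "M = mid ` (T \<times> {0..n})"
  define U where "U = (\<lambda>k. k + N * (n + n)) ` T"
  have mid_eq: "mid (k, c) + 2 * n = (n + 1) * k + c" if "k \<in> T" for k c
  proof -
    have "k = (k - 3) + 3" using that assms(3,4) by auto
    then obtain k' where "k = k' + 3" by blast
    then show ?thesis by (simp add: mid_def algebra_simps)
  qed
  have "inj_on mid (T \<times> {0..n})"
  proof (rule inj_onI, clarify)
    fix k c k' c' assume "k \<in> T" "k' \<in> T" "c \<in> {0..n}" "c' \<in> {0..n}" "mid (k, c) = mid (k', c')"
    then have "(n + 1) * k + c = (n + 1) * k' + c'" "c < n + 1" "c' < n + 1"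
      using mid_eq[of k c] mid_eq[of k' c'] by auto
    then show "k = k' \<and> c = c'" using mult_add_eq_mult_add_cancel by blast
  qed
  then have card_M: "card M = (n + 1) * card T"
    by (simp add: M_def card_image card_cartesian_product)
  have card_LU: "card L = card T" "card U = card T"
    by (simp_all add: L_def U_def card_image)
  have in_range: "\<alpha> \<le> k" "k \<le> \<beta>" if "k \<in> T" for k using that assms(3) by auto
  have bounds: "(n + 1) * \<alpha> \<le> (n + 1) * k" "(n + 1) * k \<le> (n + 1) * \<beta>" if "k \<in> T" for k
    using in_range[OF that] by (metis mult_le_mono2)+
  have LM: "x < y" if x: "x \<in> L" and y: "y \<in> M" for x y
  proof -
    obtain k where "k \<in> T" "x = k + N * n" using x unfolding L_def by auto
    moreover obtain k' c where "k' \<in> T" "y = mid (k', c)" using y by (auto simp: M_def)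
    ultimately show ?thesis using low in_range[of k] bounds(1)[of k'] mid_eq[of k' c] by linarith
  qed
  have LMU: "x < y" if x: "x \<in> L \<union> M" and y: "y \<in> U" for x y
  proof -
    obtain k' where k': "k' \<in> T" "y = k' + N * (n + n)" using y unfolding U_def by auto
    have "x + 2 * n \<le> (n + 1) * \<beta> + n"
    proof (cases "x \<in> L")
      case True
      then obtain k where "k \<in> T" "x = k + N * n" unfolding L_def by auto
      then show ?thesis using low in_range[of k] bounds[of k] by linarith
    next
      case False
      then obtain k c where "k \<in> T" "c \<le> n" "x = mid (k, c)" using x by (auto simp: M_def)
      then show ?thesis using mid_eq[of k c] bounds(2)[of k] by linarith
    qed
    then show ?thesis using high k' in_range(1)[OF k'(1)] by (simp add: algebra_simps)
  qed
  have fin: "finite L" "finite M" "finite U" using assms(2) by (simp_all add: L_def M_def U_def)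
  have "card (L \<union> M \<union> U) = card L + card M + card U"
    using card_Un_of_less[OF fin(1,2) LM] card_Un_of_less[of "L \<union> M" U] fin LMU by simp
  then have "card (L \<union> M \<union> U) = (n + 3) * card T" by (simp add: card_LU card_M algebra_simps)
  moreover have "L \<union> M \<union> U \<subseteq> X" using mid_in low_in high_in by (auto simp: L_def M_def U_def mid_def)
  ultimately show ?thesis using card_mono[OF assms(1)] by metis
qed

theorem mainTheorem3:
  fixes G :: "('v,'e) ugraph" and n :: nat
    and DG :: "('v,'e) pre_digraph" and DK :: "(nat,nat) pre_digraph"
  assumes "wf_ugraph G" and "edge_magic G" and "n \<ge> 1"
    and "int (Max (magic_set G)) - int (Min (magic_set G))
          < (int (Min (magic_set G)) - int (card (uverts G) + card (uedges G) + 2)) * int n"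
    and "is_orientation G DG" and "is_orientation (star_loop n) DK"
  shows "card (magic_set (underlying (otimes DG DK))) \<ge> (n + 3) * card (magic_set G)"
proof (cases "uedges G = {}")
  case True
  \<comment> \<open>every natural number is then a valence, and \<open>card\<close> of the infinite set \<open>\<tau>\<^sub>G\<close> is 0\<close>
  then have "magic_set G = UNIV"
    using assms(2) by (auto simp: edge_magic_def magic_set_def edge_magic_labeling_def)
  then show ?thesis by simp
next
  case False
  define N where "N = card (uverts G) + card (uedges G)"
  define T where "T = magic_set G"
  define P where "P = underlying (otimes DG DK)"
  have "T \<noteq> {}" using assms(2) by (auto simp: edge_magic_def T_def magic_set_def)
  then have "3 \<le> Min T" and T_range: "T \<subseteq> {Min T..Max T}"
    using finite_magic_set[OF assms(1) False] magic_set_subset_atLeastAtMost[OF assms(1) False]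
    by (auto simp: T_def)
  moreover note separation = valence_separation[OF Min_add_Max_magic_set_le[OF assms(1) False assms(2)]
      assms(4), folded T_def N_def]
  moreover have "finite (magic_set P)" unfolding P_def
    by (rule finite_magic_set[OF wf_ugraph_underlying_otimes[OF assms(1) wf_ugraph_star_loop assms(5,6)]])
      (simp add: underlying_otimes_orientation[OF assms(5,6)] star_loop_def False)
  moreover note product_valences = magic_set_otimes_star_loop[OF assms(1,5,6), folded P_def N_def T_def]
  ultimately have "(n + 3) * card T \<le> card (magic_set P)"
    using card_valence_families[OF _ finite_magic_set[OF assms(1) False, folded T_def] T_range]
      product_valences(2)[of _ 0] product_valences(2)[of _ n] by (simp add: product_valences(1))
  then show ?thesis by (simp add: P_def T_def)
qed

end
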